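(* Let $K$ be a compact convex set with nonempty interior in a two-dimensional real vector space, centrally symmetric with respect to the origin. Then $K$ is an ellipse (i.e. a region bounded by an ellipse centered at the origin) if and only if for all $x,y\in\partial K$ with $x\neq\pm y$, $K$ is invariant under the linear map $T$ defined by $T(x+y)=-x-y$ and $T(y-x)=y-x$. *)

theory Defs
  imports "HOL-Analysis.Analysis"
begin

definition origin_ellipse :: "(real^2) set \<Rightarrow> bool" where
  "origin_ellipse K \<longleftrightarrow> (\<exists>f :: real^2 \<Rightarrow> real^2. linear f \<and> inj f \<and> K = f ` cball 0 1)"

end

theory Submission
  imports Defs
begin

text \<open>Let \<open>det2 z w\<close> be the oriented area of \<open>z, w\<close> and
  \<open>Q z = \<integral>\<^sub>K (det2 z w)\<^sup>2 dw\<close>. This is a positive definite quadratic form, and it is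
  invariant under every linear map \<open>T\<close> with \<open>T ` K = K\<close> and \<open>\<bar>det T\<bar> = 1\<close>, because
  \<open>det2 (T z) (T w) = det T * det2 z w\<close>. For linearly independent boundary points \<open>x, y\<close>
  the map \<open>T\<close> of the hypothesis is a reflection with \<open>T x = - y\<close>, hence \<open>Q x = Q y\<close>.
  Any two boundary points are linked through a third one independent of both, so \<open>Q\<close>
  is constant, \<open>c\<close> say, on the boundary; as \<open>Q\<close> is 2-homogeneous and \<open>K\<close> is star-shaped
  about \<open>0\<close>, \<open>K = {Q \<le> c}\<close>, an ellipse. Conversely, if \<open>K = f ` cball 0 1\<close> and
  \<open>x = f a\<close>, \<open>y = f b\<close>, then \<open>T\<close> is conjugate under \<open>f\<close> to the orthogonal reflection
  along \<open>a + b\<close>, which preserves the disc.\<close>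

section \<open>Oriented area in the plane\<close>

definition det2 :: "real^2 \<Rightarrow> real^2 \<Rightarrow> real" where
  "det2 u v = u$1 * v$2 - u$2 * v$1"

definition rot90 :: "real^2 \<Rightarrow> real^2" where
  "rot90 u = vector [- u$2, u$1]"

lemma norm_vec2_power2: "(norm (u::real^2))^2 = (u$1)^2 + (u$2)^2"
  by (simp only: power2_norm_eq_inner) (simp add: inner_vec_def sum_2 power2_eq_square)

lemma det2_commute: "det2 v u = - det2 u v"
  by (simp add: det2_def)

lemma det2_rot90: "det2 u (rot90 u) = (norm u)^2"
  unfolding norm_vec2_power2 by (simp add: det2_def rot90_def power2_eq_square)

lemma norm_rot90: "norm (rot90 u) = norm u"
proof -
  have "(norm (rot90 u))^2 = (norm u)^2"
    unfolding norm_vec2_power2 by (simp add: rot90_def)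
  then show ?thesis
    by (simp add: power2_eq_iff_nonneg)
qed

lemma det2_scaleR_left: "det2 (t *\<^sub>R u) v = t * det2 u v"
  by (simp add: det2_def algebra_simps)

lemma det2_add_left: "det2 (u + v) w = det2 u w + det2 v w"
  by (simp add: det2_def algebra_simps)

lemma det2_scaleR_right: "det2 u (t *\<^sub>R v) = t * det2 u v"
  by (simp add: det2_def algebra_simps)

lemma det2_add_right: "det2 u (v + w) = det2 u v + det2 u w"
  by (simp add: det2_def algebra_simps)

lemma det2_linear_image:
  assumes "linear T"
  shows "det2 (T u) (T v) = det (matrix T) * det2 u v"
proof -
  have "T u = matrix T *v u" "T v = matrix T *v v"
    using assms by (simp_all add: matrix_works)
  then show ?thesis
    by (simp add: det2_def det_2 matrix_vector_mult_def sum_2 algebra_simps)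
qed

lemma det2_cramer: "det2 a b *\<^sub>R c = det2 c b *\<^sub>R a + det2 a c *\<^sub>R b"
  by (simp add: vec_eq_iff forall_2 det2_def algebra_simps)

lemma det2_lagrange: "(det2 p q)^2 + (p \<bullet> q)^2 = (norm p)^2 * (norm q)^2"
  unfolding norm_vec2_power2 by (simp add: det2_def inner_vec_def sum_2 power2_eq_square algebra_simps)

lemma det2_nonzero_if_orthogonal:
  assumes "p \<bullet> q = 0" "p \<noteq> 0" "q \<noteq> 0"
  shows "det2 p q \<noteq> 0"
  using det2_lagrange[of p q] assms by auto

lemma det2_nonzero_if_parallel:
  assumes "det2 x y = 0" "det2 x w \<noteq> 0" "y \<noteq> 0"
  shows "det2 y w \<noteq> 0"
proof
  assume "det2 y w = 0"
  then have "det2 x w *\<^sub>R y = 0"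
    using det2_cramer[of x w y] assms(1) by (simp add: det2_commute[of y x])
  then show False
    using assms(2,3) by simp
qed

lemma linear_eq_on_det2_basis:
  assumes "linear f" "linear g" "det2 p q \<noteq> 0" "f p = g p" "f q = g q"
  shows "f = g"
proof
  fix u :: "real^2"
  have "u = (1 / det2 p q) *\<^sub>R (det2 p q *\<^sub>R u)"
    using assms(3) by simp
  also have "\<dots> = (det2 u q / det2 p q) *\<^sub>R p + (det2 p u / det2 p q) *\<^sub>R q"
    by (simp only: det2_cramer[of p q u]) (simp add: scaleR_add_right)
  finally have u: "u = (det2 u q / det2 p q) *\<^sub>R p + (det2 p u / det2 p q) *\<^sub>R q" .
  have "h u = (det2 u q / det2 p q) *\<^sub>R h p + (det2 p u / det2 p q) *\<^sub>R h q" if "linear h" for h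
    using that by (subst u) (simp add: linear_add linear_scale)
  then show "f u = g u"
    using assms by metis
qed

lemma exists_det2_nonzero_in_open:
  assumes "open U" "u \<in> U" "z \<noteq> 0"
  obtains w where "w \<in> U" "det2 z w \<noteq> 0"
proof -
  obtain r where r: "r > 0" "ball u r \<subseteq> U"
    using assms(1,2) open_contains_ball by blast
  define w where "w = u + (r / (2 * norm z)) *\<^sub>R rot90 z"
  have "dist u w = r / 2"
    using r(1) assms(3) by (simp add: w_def dist_norm norm_rot90)
  then have "w \<in> U"
    using r by auto
  moreover have "det2 z w = det2 z u + r / 2 * norm z"
    using assms(3) by (simp add: w_def det2_add_right det2_scaleR_right det2_rot90 power2_eq_square)
  moreover have "0 < r / 2 * norm z"
    using r(1) assms(3) by simp
  ultimately show thesis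
    using that assms(2) by (cases "det2 z u = 0") auto
qed

section \<open>Reflections\<close>

definition reflect_along :: "'a::real_inner \<Rightarrow> 'a \<Rightarrow> 'a" where
  "reflect_along v u = u - (2 * (u \<bullet> v) / (v \<bullet> v)) *\<^sub>R v"

lemma reflect_along_self: "v \<noteq> 0 \<Longrightarrow> reflect_along v v = - v"
  by (simp add: reflect_along_def scaleR_2)

lemma reflect_along_orthogonal: "u \<bullet> v = 0 \<Longrightarrow> reflect_along v u = u"
  by (simp add: reflect_along_def)

lemma orthogonal_transformation_reflect_along:
  "orthogonal_transformation (reflect_along v)"
  unfolding orthogonal_transformation_def
proof (intro conjI allI)
  show "linear (reflect_along v)"
    by (intro linearI) (simp_all add: reflect_along_def inner_add_left algebra_simps add_divide_distrib)
  fix u w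
  show "reflect_along v u \<bullet> reflect_along v w = u \<bullet> w"
    by (cases "v = 0")
       (simp_all add: reflect_along_def inner_diff_left inner_diff_right inner_commute field_simps)
qed

lemma linear_reflection_exists:
  assumes "det2 p q \<noteq> 0"
  obtains T where "linear T" "T p = - p" "T q = q"
proof
  define T where "T u = (det2 p u / det2 p q) *\<^sub>R q - (det2 u q / det2 p q) *\<^sub>R p" for u
  show "linear T"
    by (intro linearI)
       (simp_all add: T_def det2_add_left det2_add_right det2_scaleR_left det2_scaleR_right
         add_divide_distrib scaleR_add_left algebra_simps)
  show "T p = - p" "T q = q"
    using assms by (simp_all add: T_def det2_def)
qed

lemma det_matrix_reflection:
  assumes "linear T" "T p = - p" "T q = q" "det2 p q \<noteq> 0"
  shows "det (matrix T) = - 1"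
proof -
  have "det (matrix T) * det2 p q = - det2 p q"
    using det2_linear_image[OF assms(1), of p q] assms(2,3) by (simp add: det2_def)
  then show ?thesis
    using assms(4) by (metis mult_cancel_right mult_minus1)
qed

section \<open>Ellipses\<close>

lemma frontier_injective_linear_image:
  fixes f :: "'a::euclidean_space \<Rightarrow> 'a"
  assumes "linear f" "inj f"
  shows "frontier (f ` S) = f ` frontier S"
  using assms
  by (simp add: frontier_def closure_injective_linear_image interior_injective_linear_image
      image_set_diff)

lemma origin_ellipse_reflection_invariant:
  assumes "origin_ellipse K" "x \<in> frontier K" "y \<in> frontier K" "x \<noteq> y" "x \<noteq> - y"
    and "linear T" "T (x + y) = - x - y" "T (y - x) = y - x"
  shows "T ` K = K"
proof -
  obtain f :: "real^2 \<Rightarrow> real^2" where f: "linear f" "inj f" "K = f ` cball 0 1"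
    using assms(1) unfolding origin_ellipse_def by blast
  have "frontier K = f ` sphere 0 1"
    using frontier_injective_linear_image[OF f(1,2)] f(3) by simp
  then obtain a b where ab: "norm a = 1" "norm b = 1" "x = f a" "y = f b"
    using assms(2,3) by auto
  define p where "p = a + b"
  define q where "q = b - a"
  have "p \<noteq> 0" "q \<noteq> 0"
    using assms(4,5) ab f(1) by (auto simp: p_def q_def linear_neg add_eq_0_iff)
  moreover have "p \<bullet> q = 0"
    using ab(1,2) by (simp add: p_def q_def algebra_simps inner_commute dot_square_norm)
  ultimately have "det2 p q \<noteq> 0"
    using det2_nonzero_if_orthogonal by blast
  let ?S = "reflect_along p"
  have S: "orthogonal_transformation ?S"
    by (rule orthogonal_transformation_reflect_along)
  have "T \<circ> f = f \<circ> ?S"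
  proof (rule linear_eq_on_det2_basis)
    show "linear (T \<circ> f)" "linear (f \<circ> ?S)"
      using assms(6) f(1) S by (auto intro: linear_compose orthogonal_transformation_linear)
    show "(T \<circ> f) p = (f \<circ> ?S) p" "(T \<circ> f) q = (f \<circ> ?S) q"
      using assms(7,8) ab f(1) \<open>p \<noteq> 0\<close> \<open>p \<bullet> q = 0\<close>
      by (simp_all add: p_def q_def reflect_along_self reflect_along_orthogonal inner_commute
          linear_add linear_diff linear_neg)
  qed fact
  then have "T ` K = f ` ?S ` cball 0 1"
    by (simp add: f(3) image_comp)
  also have "\<dots> = K"
    using S f(3) by (simp add: image_orthogonal_transformation_cball linear_0 orthogonal_transformation_linear)
  finally show ?thesis .
qed

lemma origin_ellipse_linear_preimage_cball:
  fixes g :: "real^2 \<Rightarrow> real^2"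
  assumes "linear g" "inj g"
  shows "origin_ellipse {z. norm (g z) \<le> 1}"
proof -
  have "surj g"
    using assms linear_inj_imp_surj by blast
  then have "{z. norm (g z) \<le> 1} = inv g ` cball 0 1"
    using assms(2) by (simp add: bij_vimage_eq_inv_image[symmetric] bij_def vimage_def)
  moreover have "linear (inv g)" "inj (inv g)"
    using assms \<open>surj g\<close> by (simp_all add: inj_linear_imp_inv_linear surj_imp_inj_inv)
  ultimately show ?thesis
    unfolding origin_ellipse_def by blast
qed

lemma origin_ellipse_quadratic_sublevel:
  fixes A B C c :: real
  assumes pos: "\<And>z::real^2. z \<noteq> 0 \<Longrightarrow> 0 < A * (z$1)^2 + B * (z$1 * z$2) + C * (z$2)^2"
    and "0 < c"
  shows "origin_ellipse {z::real^2. A * (z$1)^2 + B * (z$1 * z$2) + C * (z$2)^2 \<le> c}"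
proof -
  define E where "E = 4 * A * C - B^2"
  have "0 < A"
    using pos[of "vector [1, 0]"] by (simp add: vec_eq_iff forall_2)
  moreover have "0 < A * E" \<comment> \<open>\<open>A * E\<close> is the value at \<open>(- B, 2 * A)\<close>\<close>
    using pos[of "vector [- B, 2 * A]"] \<open>0 < A\<close>
    by (simp add: vec_eq_iff forall_2 E_def power2_eq_square algebra_simps)
  ultimately have "0 < E"
    by (simp add: zero_less_mult_iff)
  define s where "s = sqrt (4 * A * c)"
  define g where "g z = (vector [(2 * A * z$1 + B * z$2) / s, sqrt E * z$2 / s] :: real^2)"
    for z :: "real^2"
  have "linear g"
    by (intro linearI) (simp_all add: g_def vec_eq_iff forall_2 algebra_simps add_divide_distrib)
  moreover have "inj g"
    unfolding linear_injective_0[OF \<open>linear g\<close>]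
    using \<open>0 < A\<close> \<open>0 < E\<close> \<open>0 < c\<close> by (auto simp: g_def s_def vec_eq_iff forall_2)
  moreover have "(norm (g z))^2 = (A * (z$1)^2 + B * (z$1 * z$2) + C * (z$2)^2) / c" for z
  proof -
    have "(norm (g z))^2 = ((2 * A * z$1 + B * z$2)^2 + E * (z$2)^2) / (4 * A * c)"
      using \<open>0 < A\<close> \<open>0 < E\<close> \<open>0 < c\<close> unfolding norm_vec2_power2
      by (simp add: g_def s_def power_divide power_mult_distrib flip: add_divide_distrib)
    also have "(2 * A * z$1 + B * z$2)^2 + E * (z$2)^2 = 4 * A * (A * (z$1)^2 + B * (z$1 * z$2) + C * (z$2)^2)"
      by (simp add: E_def power2_eq_square algebra_simps)
    finally show ?thesis
      using \<open>0 < A\<close> by simp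
  qed
  then have "A * (z$1)^2 + B * (z$1 * z$2) + C * (z$2)^2 \<le> c \<longleftrightarrow> (norm (g z))^2 \<le> 1" for z
    using \<open>0 < c\<close> by (simp add: divide_le_eq_1_pos)
  then have "{z. A * (z$1)^2 + B * (z$1 * z$2) + C * (z$2)^2 \<le> c} = {z. norm (g z) \<le> 1}"
    by (simp add: power_le_one_iff)
  ultimately show ?thesis
    using origin_ellipse_linear_preimage_cball by simp
qed

section \<open>Convex bodies around the origin\<close>

lemma zero_in_interior_symmetric_convex:
  fixes K :: "'a::euclidean_space set"
  assumes "convex K" "interior K \<noteq> {}" "\<And>x. x \<in> K \<Longrightarrow> - x \<in> K"
  shows "0 \<in> interior K"
proof -
  obtain p where p: "p \<in> interior K"
    using assms(2) by blast
  have "uminus ` K = K"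
    using assms(3) by (auto simp: image_iff) (metis minus_minus)
  then have "- p \<in> interior K"
    using p interior_negations[of K] by auto
  then have "(1/2) *\<^sub>R p + (1/2) *\<^sub>R (- p) \<in> interior K"
    using convexD[OF convex_interior[OF assms(1)] p, of "- p" "1/2" "1/2"] by auto
  then show ?thesis
    by simp
qed

lemma frontier_ray_mem_iff:
  fixes K :: "'a::euclidean_space set"
  assumes "convex K" "closed K" "0 \<in> interior K" "0 < d" "d *\<^sub>R z \<in> frontier K"
  shows "z \<in> K \<longleftrightarrow> 1 \<le> d"
proof
  assume "z \<in> K"
  show "1 \<le> d"
  proof (rule ccontr)
    assume "\<not> 1 \<le> d"
    have "z \<noteq> 0"
      using assms(3,5) by (auto simp: frontier_def)
    then have "d *\<^sub>R z \<in> open_segment 0 z"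
      using assms(4) \<open>\<not> 1 \<le> d\<close> by (auto simp: in_segment intro!: exI[of _ d])
    also have "open_segment 0 z \<subseteq> interior K"
      using in_interior_closure_convex_segment[OF assms(1,3)] \<open>z \<in> K\<close> closure_subset by blast
    finally show False
      using assms(5) by (simp add: frontier_def)
  qed
next
  assume "1 \<le> d"
  have "d *\<^sub>R z \<in> K" "0 \<in> K"
    using assms(2,3,5) frontier_subset_closed interior_subset by blast+
  then have "(1 / d) *\<^sub>R (d *\<^sub>R z) + (1 - 1 / d) *\<^sub>R 0 \<in> K"
    using convexD[OF assms(1), of "d *\<^sub>R z" 0 "1 / d" "1 - 1 / d"] \<open>1 \<le> d\<close> by simp
  then show "z \<in> K"
    using assms(4) by simp
qed

lemma eq_sublevel_if_frontier_level:
  fixes K :: "'a::euclidean_space set" and Q :: "'a \<Rightarrow> real"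
  assumes "convex K" "compact K" "0 \<in> interior K"
    and level: "\<And>x. x \<in> frontier K \<Longrightarrow> Q x = c"
    and homogeneous: "\<And>t z. Q (t *\<^sub>R z) = t^2 * Q z"
    and pos: "\<And>z. z \<noteq> 0 \<Longrightarrow> 0 < Q z"
  shows "K = {z. Q z \<le> c}"
proof (rule set_eqI)
  fix z
  have "bounded K" "closed K"
    using assms(2) by (simp_all add: compact_imp_bounded compact_imp_closed)
  show "z \<in> K \<longleftrightarrow> z \<in> {z. Q z \<le> c}"
  proof (cases "z = 0")
    case True
    have "frontier K \<noteq> {}"
      using frontier_eq_empty[of K] \<open>bounded K\<close> assms(3) by auto
    then obtain x where "x \<in> frontier K"
      by blast
    then have "0 < c"
      using level pos assms(3) by (metis frontier_def DiffD2)
    moreover have "Q 0 = 0"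
      using homogeneous[of 0 0] by simp
    ultimately show ?thesis
      using True assms(3) interior_subset by auto
  next
    case False
    then obtain d where d: "0 < d" "d *\<^sub>R z \<in> frontier K"
      using ray_to_frontier[OF \<open>bounded K\<close> assms(3)] by (metis add_0)
    have "d^2 * Q z = c"
      using level[OF d(2)] homogeneous by simp
    then have "Q z \<le> c \<longleftrightarrow> 1 \<le> d^2"
      using pos[OF False] by (auto simp: mult_le_cancel_right1)
    also have "\<dots> \<longleftrightarrow> 1 \<le> d"
      using abs_le_square_iff[of 1 d] d(1) by simp
    also have "\<dots> \<longleftrightarrow> z \<in> K"
      using frontier_ray_mem_iff[OF assms(1) \<open>closed K\<close> assms(3) d] by simp
    finally show ?thesis
      by simp
  qed
qed

lemma eq_on_frontier_if_eq_on_independent: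
  assumes "bounded K" "0 \<in> interior K"
    and independent: "\<And>x y. x \<in> frontier K \<Longrightarrow> y \<in> frontier K \<Longrightarrow> det2 x y \<noteq> 0 \<Longrightarrow> Q x = Q y"
    and "x \<in> frontier K" "y \<in> frontier K"
  shows "Q x = Q y"
proof -
  have nonzero: "v \<noteq> 0" if "v \<in> frontier K" for v
    using that assms(2) by (auto simp: frontier_def)
  have "rot90 x \<noteq> 0"
    using norm_rot90[of x] nonzero[OF assms(4)] by force
  then obtain d where "0 < d" "0 + d *\<^sub>R rot90 x \<in> frontier K"
    using ray_to_frontier[OF assms(1,2)] by blast
  then have d: "0 < d" "d *\<^sub>R rot90 x \<in> frontier K"
    by simp_all
  define w where "w = d *\<^sub>R rot90 x"
  have "det2 x w \<noteq> 0"
    using d(1) nonzero[OF assms(4)] by (simp add: w_def det2_scaleR_right det2_rot90)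
  show ?thesis
  proof (cases "det2 x y = 0")
    case True
    then have "det2 y w \<noteq> 0"
      using det2_nonzero_if_parallel \<open>det2 x w \<noteq> 0\<close> nonzero[OF assms(5)] by blast
    then show ?thesis
      using independent[OF assms(4) _ \<open>det2 x w \<noteq> 0\<close>] independent[OF assms(5)] d(2)
      by (simp add: w_def)
  next
    case False
    then show ?thesis
      using independent[OF assms(4,5)] by blast
  qed
qed

section \<open>The inertia form\<close>

lemma absolutely_integrable_continuous_on_compact:
  fixes f :: "'a::euclidean_space \<Rightarrow> 'b::euclidean_space"
  assumes "compact S" "continuous_on S f"
  shows "f absolutely_integrable_on S"
proof -
  have "(\<lambda>x. indicator S x *\<^sub>R f x) \<in> borel_measurable lborel"
    using borel_measurable_continuous_on_indicator[OF borel_compact[OF assms(1)] assms(2)] by simp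
  then show ?thesis
    unfolding set_integrable_def
    using borel_integrable_compact[OF assms] integrable_completion by blast
qed

lemma integrable_continuous_on_compact:
  fixes f :: "'a::euclidean_space \<Rightarrow> 'b::euclidean_space"
  assumes "compact S" "continuous_on S f"
  shows "f integrable_on S"
  using absolutely_integrable_continuous_on_compact[OF assms] set_lebesgue_integral_eq_integral(1)
  by blast

text \<open>The library states linear change of variables for vector-valued integrands only;
  a real-valued one is passed through \<open>real^1\<close>.\<close>

lemma integral_linear_image_real:
  fixes f :: "real^'n::{finite,wellorder} \<Rightarrow> real" and g :: "real^'n::_ \<Rightarrow> real^'n::_"
  assumes "linear g" "f absolutely_integrable_on (g ` S)"
  shows "integral (g ` S) f = \<bar>det (matrix g)\<bar> * integral S (f \<circ> g)"
proof -
  let ?F = "\<lambda>x. (vec (f x) :: real^1)"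
  have "?F absolutely_integrable_on (g ` S)"
    using assms(2) by (simp add: absolutely_integrable_on_1_iff)
  then have "integral (g ` S) ?F = \<bar>det (matrix g)\<bar> *\<^sub>R integral S (?F \<circ> g)"
    using integral_change_of_variables_linear[OF assms(1)] by blast
  then have "integral (g ` S) ?F $ 1 = (\<bar>det (matrix g)\<bar> *\<^sub>R integral S (?F \<circ> g)) $ 1"
    by simp
  then show ?thesis
    by (simp add: integral_on_1_eq[of "g ` S"] integral_on_1_eq[of S] o_def)
qed

definition inertia_form :: "(real^2) set \<Rightarrow> real^2 \<Rightarrow> real" where
  "inertia_form K z = integral K (\<lambda>w. (det2 z w)^2)"

lemma continuous_on_det2_power2: "continuous_on S (\<lambda>w. (det2 z w)^2)"
  unfolding det2_def by (intro continuous_intros)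

lemma inertia_form_scaleR: "inertia_form K (t *\<^sub>R z) = t^2 * inertia_form K z"
  by (simp add: inertia_form_def det2_scaleR_left power_mult_distrib)

lemma inertia_form_linear_image:
  assumes "compact K" "linear T" "T ` K = K" "\<bar>det (matrix T)\<bar> = 1"
  shows "inertia_form K (T z) = inertia_form K z"
proof -
  have "(\<lambda>w. (det2 (T z) w)^2) absolutely_integrable_on (T ` K)"
    using assms(1,3) by (simp add: absolutely_integrable_continuous_on_compact continuous_on_det2_power2)
  then have "integral (T ` K) (\<lambda>w. (det2 (T z) w)^2) = integral K (\<lambda>w. (det2 (T z) (T w))^2)"
    using integral_linear_image_real[OF assms(2)] assms(4) by (simp add: o_def)
  then have "inertia_form K (T z) = integral K (\<lambda>w. (det2 (T z) (T w))^2)"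
    using assms(3) by (simp add: inertia_form_def)
  also have "\<dots> = inertia_form K z"
    using assms(4) by (simp add: inertia_form_def det2_linear_image[OF assms(2)] power_mult_distrib
        abs_square_eq_1)
  finally show ?thesis .
qed

lemma inertia_form_quadratic:
  assumes "compact K"
  obtains A B C where "\<And>z. inertia_form K z = A * (z$1)^2 + B * (z$1 * z$2) + C * (z$2)^2"
proof
  fix z :: "real^2"
  have int: "f integrable_on K" if "continuous_on K f" for f :: "real^2 \<Rightarrow> real"
    using integrable_continuous_on_compact[OF assms that] .
  have "(\<lambda>w. (det2 z w)^2) = (\<lambda>w. ((w$2)^2 * (z$1)^2 + (- 2 * (w$1 * w$2)) * (z$1 * z$2))
      + (w$1)^2 * (z$2)^2)"
    by (auto simp: det2_def power2_eq_square algebra_simps)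
  then show "inertia_form K z = integral K (\<lambda>w. (w$2)^2) * (z$1)^2
    + integral K (\<lambda>w. - 2 * (w$1 * w$2)) * (z$1 * z$2) + integral K (\<lambda>w. (w$1)^2) * (z$2)^2"
    unfolding inertia_form_def
    by (simp add: int continuous_intros integral_add integral_diff integral_mult_left
        integral_mult_right)
qed

lemma inertia_form_pos:
  assumes "compact K" "interior K \<noteq> {}" "z \<noteq> 0"
  shows "0 < inertia_form K z"
proof -
  let ?f = "\<lambda>w. (det2 z w)^2"
  obtain u where "u \<in> interior K"
    using assms(2) by blast
  then obtain w where w: "w \<in> interior K" "det2 z w \<noteq> 0"
    using exists_det2_nonzero_in_open[OF open_interior _ assms(3)] by blast
  then obtain a b where ab: "cbox a b \<subseteq> interior K" "w \<in> box a b"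
    using open_contains_cbox[OF open_interior] by metis
  have "box a b \<noteq> {}" "w \<in> cbox a b" "cbox a b \<subseteq> K"
    using ab box_subset_cbox interior_subset by blast+
  then have "integral (cbox a b) ?f \<noteq> 0"
    using integral_cbox_eq_0_iff[OF continuous_on_det2_power2 \<open>box a b \<noteq> {}\<close>, of z] w(2)
    by auto
  moreover have "0 \<le> integral (cbox a b) ?f"
    by (rule integral_nonneg[OF integrable_continuous[OF continuous_on_det2_power2]]) simp
  moreover have "integral (cbox a b) ?f \<le> inertia_form K z"
    unfolding inertia_form_def
    by (rule integral_subset_le[OF \<open>cbox a b \<subseteq> K\<close> integrable_continuous[OF continuous_on_det2_power2]
          integrable_continuous_on_compact[OF assms(1) continuous_on_det2_power2]]) simp
  ultimately show ?thesis
    by linarith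
qed

lemma inertia_form_eq_if_reflection_invariant:
  assumes "compact K" "det2 x y \<noteq> 0"
    and "\<And>T. linear T \<Longrightarrow> T (x + y) = - x - y \<Longrightarrow> T (y - x) = y - x \<Longrightarrow> T ` K = K"
  shows "inertia_form K x = inertia_form K y"
proof -
  have "det2 (x + y) (y - x) \<noteq> 0"
    using assms(2) by (simp add: det2_def algebra_simps)
  then obtain T where T: "linear T" "T (x + y) = - (x + y)" "T (y - x) = y - x"
    by (rule linear_reflection_exists)
  have "det (matrix T) = - 1"
    by (rule det_matrix_reflection[OF T]) fact
  moreover have "T ` K = K"
    using assms(3) T by simp
  moreover have "T x = - y"
  proof -
    have "(x + y) - (y - x) = 2 *\<^sub>R x"
      by (simp add: vec_eq_iff)
    then have "2 *\<^sub>R T x = T ((x + y) - (y - x))"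
      using linear_scale[OF T(1)] by simp
    also have "\<dots> = T (x + y) - T (y - x)"
      by (rule linear_diff[OF T(1)])
    also have "\<dots> = 2 *\<^sub>R (- y)"
      using T(2,3) by (simp add: vec_eq_iff)
    finally show ?thesis
      by (simp only: scaleR_cancel_left) simp
  qed
  ultimately have "inertia_form K (T x) = inertia_form K x"
    by (intro inertia_form_linear_image[OF assms(1) T(1)]) simp_all
  then show ?thesis
    using inertia_form_scaleR[of K "- 1" y] \<open>T x = - y\<close> by simp
qed

lemma origin_ellipse_if_reflection_invariant:
  fixes K :: "(real^2) set"
  assumes "compact K" "convex K" "interior K \<noteq> {}" "\<And>x. x \<in> K \<Longrightarrow> - x \<in> K"
    and invariant: "\<And>x y T. x \<in> frontier K \<Longrightarrow> y \<in> frontier K \<Longrightarrow> x \<noteq> y \<Longrightarrow> x \<noteq> - y \<Longrightarrow>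
      linear T \<Longrightarrow> T (x + y) = - x - y \<Longrightarrow> T (y - x) = y - x \<Longrightarrow> T ` K = K"
  shows "origin_ellipse K"
proof -
  let ?Q = "inertia_form K"
  have "0 \<in> interior K"
    using zero_in_interior_symmetric_convex assms(2-4) by blast
  have "bounded K"
    using assms(1) compact_imp_bounded by blast
  have level: "?Q x = ?Q y" if "x \<in> frontier K" "y \<in> frontier K" for x y
    using \<open>bounded K\<close> \<open>0 \<in> interior K\<close> _ that
  proof (rule eq_on_frontier_if_eq_on_independent)
    fix x y assume "x \<in> frontier K" "y \<in> frontier K" "det2 x y \<noteq> 0"
    moreover have "x \<noteq> y" "x \<noteq> - y"
      using \<open>det2 x y \<noteq> 0\<close> by (auto simp: det2_def)
    ultimately show "?Q x = ?Q y"
      using inertia_form_eq_if_reflection_invariant[OF assms(1)] invariant by blast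
  qed
  obtain x0 where "x0 \<in> frontier K"
    using frontier_eq_empty[of K] \<open>bounded K\<close> assms(3) by auto
  define c where "c = ?Q x0"
  have "x0 \<noteq> 0"
    using \<open>x0 \<in> frontier K\<close> \<open>0 \<in> interior K\<close> by (auto simp: frontier_def)
  then have "0 < c"
    using inertia_form_pos[OF assms(1,3)] by (simp add: c_def)
  have K: "K = {z. ?Q z \<le> c}"
    using assms(2,1) \<open>0 \<in> interior K\<close>
  proof (rule eq_sublevel_if_frontier_level)
    show "?Q x = c" if "x \<in> frontier K" for x
      using level[OF that \<open>x0 \<in> frontier K\<close>] by (simp add: c_def)
  qed (simp_all add: inertia_form_scaleR inertia_form_pos assms(1,3))
  obtain A B C where Q: "\<And>z. ?Q z = A * (z$1)^2 + B * (z$1 * z$2) + C * (z$2)^2"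
    using inertia_form_quadratic[OF assms(1)] by blast
  have "origin_ellipse {z. A * (z$1)^2 + B * (z$1 * z$2) + C * (z$2)^2 \<le> c}"
    using inertia_form_pos[OF assms(1,3)] \<open>0 < c\<close>
    by (intro origin_ellipse_quadratic_sublevel) (simp_all flip: Q)
  then show ?thesis
    using K by (simp add: Q)
qed

theorem corollary3p1:
  fixes K :: "(real^2) set"
  assumes "compact K" and "convex K" and "interior K \<noteq> {}"
    and "\<And>x. x \<in> K \<Longrightarrow> - x \<in> K"
  shows "origin_ellipse K \<longleftrightarrow>
    (\<forall>x\<in>frontier K. \<forall>y\<in>frontier K. x \<noteq> y \<and> x \<noteq> - y \<longrightarrow>
       (\<forall>T :: real^2 \<Rightarrow> real^2. linear T \<and> T (x + y) = - x - y \<and> T (y - x) = y - x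
          \<longrightarrow> T ` K = K))"
  using origin_ellipse_reflection_invariant origin_ellipse_if_reflection_invariant[OF assms]
  by blast

end
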